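(* Let $Y$ be a finite connected simple undirected graph. If $Y$ is not bipartite then $\delta(Y)=\tfrac12\kappa(Y)$. If $Y$ is bipartite then $\delta(Y)=\tfrac12(\kappa(Y)+1)$.
   Context: $\mathsf{Acyc}(Y)$ is the set of acyclic orientations of $Y$. A click at a vertex $x$ that is a source of an orientation reverses all edges incident to $x$, making $x$ a sink. Two acyclic orientations are $\kappa$-equivalent if one can be transformed into the other by a finite sequence of clicks; $\kappa(Y)$ is the number of $\kappa$-equivalence classes. For $O\in\mathsf{Acyc}(Y)$ let $O^{\mathrm{rev}}$ denote the orientation with every edge reversed. $\delta$-equivalence is the equivalence relation on $\mathsf{Acyc}(Y)$ generated by clicks and by $O\mapsto O^{\mathrm{rev}}$, and $\delta(Y)$ is the number of $\delta$-equivalence classes. *)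

theory Defs
  imports Complex_Main
begin

definition simple_graph :: "'a set \<Rightarrow> ('a \<Rightarrow> 'a \<Rightarrow> bool) \<Rightarrow> bool" where
  "simple_graph V E \<longleftrightarrow> finite V \<and> (\<forall>x y. E x y \<longrightarrow> x \<in> V \<and> y \<in> V)
     \<and> (\<forall>x y. E x y \<longrightarrow> E y x) \<and> (\<forall>x. \<not> E x x)"

definition edge_rel :: "('a \<Rightarrow> 'a \<Rightarrow> bool) \<Rightarrow> ('a \<times> 'a) set" where
  "edge_rel E = {(x, y). E x y}"

definition connected_graph :: "'a set \<Rightarrow> ('a \<Rightarrow> 'a \<Rightarrow> bool) \<Rightarrow> bool" where
  "connected_graph V E \<longleftrightarrow> (\<forall>x\<in>V. \<forall>y\<in>V. (x, y) \<in> (edge_rel E)\<^sup>*)"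

definition bipartite :: "'a set \<Rightarrow> ('a \<Rightarrow> 'a \<Rightarrow> bool) \<Rightarrow> bool" where
  "bipartite V E \<longleftrightarrow> (\<exists>c :: 'a \<Rightarrow> bool. \<forall>x\<in>V. \<forall>y\<in>V. E x y \<longrightarrow> c x \<noteq> c y)"

definition Acyc :: "'a set \<Rightarrow> ('a \<Rightarrow> 'a \<Rightarrow> bool) \<Rightarrow> ('a \<times> 'a) set set" where
  "Acyc V E = {Or. Or \<subseteq> edge_rel E
      \<and> (\<forall>x y. E x y \<longrightarrow> ((x, y) \<in> Or \<longleftrightarrow> (y, x) \<notin> Or))
      \<and> acyclic Or}"

definition is_source :: "('a \<times> 'a) set \<Rightarrow> 'a \<Rightarrow> bool" where
  "is_source Or x \<longleftrightarrow> (\<forall>y. (y, x) \<notin> Or)"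

definition click :: "('a \<times> 'a) set \<Rightarrow> 'a \<Rightarrow> ('a \<times> 'a) set" where
  "click Or x = {(a, b) \<in> Or. a \<noteq> x \<and> b \<noteq> x} \<union> {(b, a). (a, b) \<in> Or \<and> (a = x \<or> b = x)}"

definition click_step :: "'a set \<Rightarrow> ('a \<Rightarrow> 'a \<Rightarrow> bool) \<Rightarrow> (('a \<times> 'a) set \<times> ('a \<times> 'a) set) set" where
  "click_step V E = {(Or, Or'). Or \<in> Acyc V E \<and> (\<exists>x\<in>V. is_source Or x \<and> Or' = click Or x)}"

definition rev_orient :: "('a \<times> 'a) set \<Rightarrow> ('a \<times> 'a) set" where
  "rev_orient Or = Or\<inverse>"

definition rev_step :: "'a set \<Rightarrow> ('a \<Rightarrow> 'a \<Rightarrow> bool) \<Rightarrow> (('a \<times> 'a) set \<times> ('a \<times> 'a) set) set" where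
  "rev_step V E = {(Or, Or'). Or \<in> Acyc V E \<and> Or' = rev_orient Or}"

definition kappa_equiv :: "'a set \<Rightarrow> ('a \<Rightarrow> 'a \<Rightarrow> bool) \<Rightarrow> (('a \<times> 'a) set \<times> ('a \<times> 'a) set) set" where
  "kappa_equiv V E = (click_step V E \<union> (click_step V E)\<inverse>)\<^sup>*"

definition delta_equiv :: "'a set \<Rightarrow> ('a \<Rightarrow> 'a \<Rightarrow> bool) \<Rightarrow> (('a \<times> 'a) set \<times> ('a \<times> 'a) set) set" where
  "delta_equiv V E = (click_step V E \<union> (click_step V E)\<inverse> \<union> rev_step V E \<union> (rev_step V E)\<inverse>)\<^sup>*"

definition kappa :: "'a set \<Rightarrow> ('a \<Rightarrow> 'a \<Rightarrow> bool) \<Rightarrow> nat" where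
  "kappa V E = card (Acyc V E // kappa_equiv V E)"

definition delta :: "'a set \<Rightarrow> ('a \<Rightarrow> 'a \<Rightarrow> bool) \<Rightarrow> nat" where
  "delta V E = card (Acyc V E // delta_equiv V E)"

end

theory Submission
  imports Defs
begin

text \<open>Reversal commutes with clicks, so it induces an involution on the \<open>\<kappa>\<close>-classes whose
  orbits are the \<open>\<delta>\<close>-classes; hence \<open>\<kappa>(Y) + f = 2 \<delta>(Y)\<close>, where \<open>f\<close> is the number of
  \<open>\<kappa>\<close>-classes fixed by reversal. If \<open>O\<close> is \<open>\<kappa>\<close>-equivalent to its reverse, counting the
  clicks at each vertex along a connecting click sequence gives a height function dropping by
  one along every arc of \<open>O\<close>; its parity is a proper 2-colouring, so \<open>f = 0\<close> unless \<open>Y\<close> is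
  bipartite. If \<open>Y\<close> is connected and bipartite, orienting every edge from one colour class to
  the other gives a fixed class, and clicking vertices of maximal height brings every
  orientation with a height function down to one of these two \<open>\<kappa>\<close>-equivalent orientations,
  so \<open>f = 1\<close>.\<close>

lemma card_involution_fibres:
  assumes fin: "finite A"
    and f_in: "\<And>a. a \<in> A \<Longrightarrow> f a \<in> A"
    and h_eq: "\<And>a b. a \<in> A \<Longrightarrow> b \<in> A \<Longrightarrow> h a = h b \<longleftrightarrow> b = a \<or> b = f a"
  shows "card A + card {a \<in> A. f a = a} = 2 * card (h ` A)"
proof -
  let ?g = "\<lambda>a. 1 + (if f a = a then 1 else 0) :: nat"
  have fibre_sum: "(\<Sum>b | b \<in> A \<and> h b = h a. ?g b) = 2" if a: "a \<in> A" for a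
  proof -
    have "b \<in> A \<and> h b = h a \<longleftrightarrow> b = a \<or> b = f a" for b
    proof (cases "b \<in> A")
      case True
      then show ?thesis
        using h_eq[OF a True] by metis
    next
      case False
      then show ?thesis
        using a f_in[OF a] by blast
    qed
    then have fibre: "{b. b \<in> A \<and> h b = h a} = {a, f a}"
      by blast
    show ?thesis
    proof (cases "f a = a")
      case False
      have "h a = h (f a)"
        using h_eq[OF a f_in[OF a]] by simp
      then have "f (f a) = a"
        using h_eq[OF f_in[OF a] a] False by simp
      with False show ?thesis
        unfolding fibre by simp
    qed (simp add: fibre)
  qed
  have "card {a \<in> A. f a = a} = (\<Sum>a\<in>A. if f a = a then 1 else 0)"
    using sum.inter_filter[OF fin, of "\<lambda>_. 1::nat"] by simp
  then have "card A + card {a \<in> A. f a = a} = (\<Sum>a\<in>A. ?g a)"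
    using card_eq_sum[of A] by (simp only: sum.distrib)
  also have "\<dots> = (\<Sum>y\<in>h ` A. \<Sum>b | b \<in> A \<and> h b = y. ?g b)"
    by (rule sum.image_gen[OF fin])
  also have "\<dots> = (\<Sum>y\<in>h ` A. 2)"
  proof (rule sum.cong[OF refl])
    fix y
    assume "y \<in> h ` A"
    then obtain a where "a \<in> A" and "y = h a" by blast
    then show "(\<Sum>b | b \<in> A \<and> h b = y. ?g b) = 2"
      using fibre_sum by simp
  qed
  finally show ?thesis by simp
qed

lemma mem_click: "(a, b) \<in> click Or x \<longleftrightarrow> (if a = x \<or> b = x then (b, a) \<in> Or else (a, b) \<in> Or)"
  unfolding click_def by auto

lemma AcycD:
  assumes "Or \<in> Acyc V E"
  shows Acyc_edge: "(u, v) \<in> Or \<Longrightarrow> E u v"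
    and Acyc_orient: "E u v \<Longrightarrow> (u, v) \<in> Or \<longleftrightarrow> (v, u) \<notin> Or"
    and Acyc_acyclic: "acyclic Or"
  using assms unfolding Acyc_def edge_rel_def by blast+

lemma acyclic_click:
  assumes "acyclic Or" and "is_source Or x"
  shows "acyclic (click Or x)"
proof -
  let ?R = "{(a, b) \<in> Or. a \<noteq> x \<and> b \<noteq> x}"
  have sink: "(x, w) \<notin> click Or x" for w
    using assms(2) by (simp add: is_source_def mem_click)
  have avoid_x: "(y, z) \<in> ?R\<^sup>+ \<or> z = x" if "(y, z) \<in> (click Or x)\<^sup>+" for y z
    using that
  proof (induction rule: trancl_induct)
    case (base z)
    then show ?case
      using assms(2) by (auto simp: mem_click is_source_def split: if_splits)
  next
    case (step z w)
    then show ?case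
      using assms(2) by (auto simp: mem_click is_source_def split: if_splits intro: trancl_into_trancl)
  qed
  have R_sub: "?R\<^sup>+ \<subseteq> Or\<^sup>+"
    using trancl_mono[of _ ?R Or] by blast
  show ?thesis
    unfolding acyclic_def
  proof (intro allI notI)
    fix y
    assume cycle: "(y, y) \<in> (click Or x)\<^sup>+"
    show False
    proof (cases "y = x")
      case True
      with cycle sink show False
        by (auto dest: tranclD)
    next
      case False
      with avoid_x[OF cycle] R_sub assms(1) show False
        unfolding acyclic_def by blast
    qed
  qed
qed

lemma equiv_rtrancl_sym:
  assumes "sym r"
  shows "equiv UNIV (r\<^sup>*)"
  using assms by (simp add: equiv_def refl_rtrancl sym_rtrancl trans_rtrancl)

lemma equiv_kappa_equiv: "equiv UNIV (kappa_equiv V E)"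
  unfolding kappa_equiv_def by (rule equiv_rtrancl_sym) (rule sym_Un_converse)

lemma equiv_delta_equiv: "equiv UNIV (delta_equiv V E)"
  unfolding delta_equiv_def by (rule equiv_rtrancl_sym) (auto simp: sym_def)

lemma kappa_equiv_sym: "(P, Q) \<in> kappa_equiv V E \<Longrightarrow> (Q, P) \<in> kappa_equiv V E"
  unfolding kappa_equiv_def by (rule symD[OF sym_rtrancl[OF sym_Un_converse]])

lemma kappa_equiv_trans:
  "(P, Q) \<in> kappa_equiv V E \<Longrightarrow> (Q, R) \<in> kappa_equiv V E \<Longrightarrow> (P, R) \<in> kappa_equiv V E"
  unfolding kappa_equiv_def by (rule rtrancl_trans)

lemma kappa_class_eq_iff: "kappa_equiv V E `` {P} = kappa_equiv V E `` {Q} \<longleftrightarrow> (P, Q) \<in> kappa_equiv V E"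
  by (rule eq_equiv_class_iff[OF equiv_kappa_equiv UNIV_I UNIV_I])

lemma quotient_eq_image: "A // r = (\<lambda>x. r `` {x}) ` A"
  unfolding quotient_def by (rule UNION_singleton_eq_range)

lemma kappa_equiv_click:
  "Or \<in> Acyc V E \<Longrightarrow> x \<in> V \<Longrightarrow> is_source Or x \<Longrightarrow> (Or, click Or x) \<in> kappa_equiv V E"
  unfolding kappa_equiv_def click_step_def by blast

lemma kappa_equiv_subset_delta_equiv: "kappa_equiv V E \<subseteq> delta_equiv V E"
  unfolding kappa_equiv_def delta_equiv_def by (rule rtrancl_mono) blast

lemma delta_image_kappa_class:
  "delta_equiv V E `` (kappa_equiv V E `` {Or}) = delta_equiv V E `` {Or}"
proof
  show "delta_equiv V E `` (kappa_equiv V E `` {Or}) \<subseteq> delta_equiv V E `` {Or}"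
  proof
    fix Q
    assume "Q \<in> delta_equiv V E `` (kappa_equiv V E `` {Or})"
    then obtain P where "(Or, P) \<in> delta_equiv V E" and "(P, Q) \<in> delta_equiv V E"
      using kappa_equiv_subset_delta_equiv by blast
    then have "(Or, Q) \<in> delta_equiv V E"
      unfolding delta_equiv_def by (rule rtrancl_trans)
    then show "Q \<in> delta_equiv V E `` {Or}" by simp
  qed
  show "delta_equiv V E `` {Or} \<subseteq> delta_equiv V E `` (kappa_equiv V E `` {Or})"
    by (auto simp: kappa_equiv_def)
qed

definition height_function :: "('a \<times> 'a) set \<Rightarrow> ('a \<Rightarrow> int) \<Rightarrow> bool" where
  "height_function Or c \<longleftrightarrow> (\<forall>(u, v) \<in> Or. c u = c v + 1)"

lemma height_functionD: "height_function Or c \<Longrightarrow> (u, v) \<in> Or \<Longrightarrow> c u = c v + 1"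
  unfolding height_function_def by blast

lemma acyclic_if_height_function:
  assumes "height_function Or c"
  shows "acyclic Or"
proof -
  have "c y < c x" if "(x, y) \<in> Or\<^sup>+" for x y
    using that assms by (induction rule: trancl_induct) (auto simp: height_function_def)
  then show ?thesis
    unfolding acyclic_def by blast
qed

lemma height_function_click:
  assumes "height_function Or c" and "is_source Or x"
  shows "height_function (click Or x) (c(x := c x - 2))"
  using assms unfolding height_function_def is_source_def by (fastforce simp: mem_click split: if_splits)

text \<open>\<open>c x\<close> is the net number of clicks at \<open>x\<close> on a click sequence from \<open>Or\<close> to \<open>P\<close>:
  an arc of \<open>Or\<close> is reversed in \<open>P\<close> exactly when its tail was clicked once more than its head.\<close>

definition click_potential :: "('a \<times> 'a) set \<Rightarrow> ('a \<times> 'a) set \<Rightarrow> ('a \<Rightarrow> int) \<Rightarrow> bool" where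
  "click_potential Or P c \<longleftrightarrow>
     (\<forall>(u, v) \<in> Or. (u, v) \<in> P \<and> c u = c v \<or> (v, u) \<in> P \<and> c u = c v + 1)"

lemma click_potential_click:
  assumes "is_source P x"
  shows "click_potential Or (click P x) (c(x := c x + 1)) \<longleftrightarrow> click_potential Or P c"
proof -
  let ?c = "c(x := c x + 1)"
  have "((u, v) \<in> click P x \<and> ?c u = ?c v \<or> (v, u) \<in> click P x \<and> ?c u = ?c v + 1)
    \<longleftrightarrow> ((u, v) \<in> P \<and> c u = c v \<or> (v, u) \<in> P \<and> c u = c v + 1)" for u v
    using assms unfolding is_source_def
    by (cases "u = x"; cases "v = x") (auto simp: mem_click)
  then show ?thesis
    unfolding click_potential_def by simp
qed

lemma kappa_equiv_click_potential:
  assumes "(Or, P) \<in> kappa_equiv V E"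
  shows "\<exists>c. click_potential Or P c"
  using assms unfolding kappa_equiv_def
proof (induction rule: rtrancl_induct)
  case base
  have "click_potential Or Or (\<lambda>_. 0)"
    by (auto simp: click_potential_def)
  then show ?case by blast
next
  case (step P Q)
  then obtain c where c: "click_potential Or P c" by blast
  from step.hyps(2) consider x where "is_source P x" "Q = click P x"
    | x where "is_source Q x" "P = click Q x"
    unfolding click_step_def by blast
  then show ?case
  proof cases
    case 1
    with c have "click_potential Or Q (c(x := c x + 1))"
      by (simp add: click_potential_click)
    then show ?thesis by blast
  next
    case 2
    with c have "click_potential Or Q (c(x := c x - 1))"
      using click_potential_click[of Q x Or "c(x := c x - 1)"] by simp
    then show ?thesis by blast
  qed
qed

lemma self_reverse_height_function:
  assumes "acyclic Or" and "(Or, Or\<inverse>) \<in> kappa_equiv V E"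
  shows "\<exists>c. height_function Or c"
proof -
  obtain c where c: "click_potential Or (Or\<inverse>) c"
    using kappa_equiv_click_potential[OF assms(2)] ..
  have "(v, u) \<notin> Or" if "(u, v) \<in> Or" for u v
  proof
    assume "(v, u) \<in> Or"
    then have "(u, u) \<in> Or\<^sup>+"
      by (rule trancl_into_trancl[OF r_into_trancl[OF that]])
    with assms(1) show False
      unfolding acyclic_def by blast
  qed
  with c have "height_function Or c"
    unfolding click_potential_def height_function_def by blast
  then show ?thesis by blast
qed

lemma bipartite_if_height_function:
  assumes "Or \<in> Acyc V E" and "height_function Or c"
  shows "bipartite V E"
proof -
  have "even (c u) \<noteq> even (c v)" if edge: "E u v" for u v
  proof -
    consider "(u, v) \<in> Or" | "(v, u) \<in> Or"
      using Acyc_orient[OF assms(1) edge] by blast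
    then show ?thesis
    proof cases
      case 1
      then have "c u = c v + 1" by (rule height_functionD[OF assms(2)])
      then show ?thesis by simp
    next
      case 2
      then have "c v = c u + 1" by (rule height_functionD[OF assms(2)])
      then show ?thesis by simp
    qed
  qed
  then show ?thesis
    unfolding bipartite_def by (intro exI[of _ "\<lambda>u. even (c u)"]) blast
qed

definition proper_colouring :: "('a \<Rightarrow> 'a \<Rightarrow> bool) \<Rightarrow> ('a \<Rightarrow> bool) \<Rightarrow> bool" where
  "proper_colouring E b \<longleftrightarrow> (\<forall>u v. E u v \<longrightarrow> b u \<noteq> b v)"

definition colour_orientation :: "('a \<Rightarrow> 'a \<Rightarrow> bool) \<Rightarrow> ('a \<Rightarrow> bool) \<Rightarrow> ('a \<times> 'a) set" where
  "colour_orientation E b = {(u, v). E u v \<and> b u}"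

lemma connected_proper_colourings:
  assumes "connected_graph V E" and "proper_colouring E b" and "proper_colouring E b'"
  shows "(\<forall>u\<in>V. b u \<longleftrightarrow> b' u) \<or> (\<forall>u\<in>V. b u \<longleftrightarrow> \<not> b' u)"
proof (cases "V = {}")
  case False
  then obtain v0 where v0: "v0 \<in> V" by blast
  have "(b u \<longleftrightarrow> b' u) \<longleftrightarrow> (b v0 \<longleftrightarrow> b' v0)" if "u \<in> V" for u
  proof -
    have "(v0, u) \<in> (edge_rel E)\<^sup>*"
      using assms(1) v0 that unfolding connected_graph_def by blast
    then show ?thesis
    proof induction
      case (step y z)
      then have "E y z"
        by (simp add: edge_rel_def)
      with step.IH assms(2,3) show ?case
        unfolding proper_colouring_def by blast
    qed simp
  qed
  then show ?thesis by blast
qed simp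

lemma height_function_colour_orientation:
  assumes "proper_colouring E b"
  shows "height_function (colour_orientation E b) (\<lambda>u. if b u then 1 else 0)"
  using assms unfolding height_function_def colour_orientation_def proper_colouring_def by auto

definition self_reverse_classes :: "'a set \<Rightarrow> ('a \<Rightarrow> 'a \<Rightarrow> bool) \<Rightarrow> ('a \<times> 'a) set set set" where
  "self_reverse_classes V E = {C \<in> Acyc V E // kappa_equiv V E. converse ` C = C}"

locale finite_simple_graph =
  fixes V :: "'a set" and E :: "'a \<Rightarrow> 'a \<Rightarrow> bool"
  assumes simple: "simple_graph V E"
begin

lemma finite_vertices: "finite V"
  using simple unfolding simple_graph_def by blast

lemma edge_vertices: "E u v \<Longrightarrow> u \<in> V \<and> v \<in> V"
  using simple unfolding simple_graph_def by blast

lemma edge_sym: "E u v \<Longrightarrow> E v u"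
  using simple unfolding simple_graph_def by blast

lemma finite_Acyc: "finite (Acyc V E)"
proof (rule finite_subset)
  show "Acyc V E \<subseteq> Pow (V \<times> V)"
  proof
    fix Or
    assume "Or \<in> Acyc V E"
    then show "Or \<in> Pow (V \<times> V)"
      by (auto dest!: Acyc_edge[OF \<open>Or \<in> Acyc V E\<close>] edge_vertices)
  qed
  show "finite (Pow (V \<times> V))"
    using finite_vertices by simp
qed

lemma converse_Acyc:
  assumes "Or \<in> Acyc V E"
  shows "Or\<inverse> \<in> Acyc V E"
proof -
  have "(u, v) \<in> Or\<inverse> \<Longrightarrow> E u v" for u v
    using Acyc_edge[OF assms] edge_sym by blast
  moreover have "E u v \<Longrightarrow> (u, v) \<in> Or\<inverse> \<longleftrightarrow> (v, u) \<notin> Or\<inverse>" for u v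
    using Acyc_orient[OF assms] edge_sym by blast
  moreover have "acyclic (Or\<inverse>)"
    using Acyc_acyclic[OF assms] by simp
  ultimately show ?thesis
    unfolding Acyc_def edge_rel_def by blast
qed

lemma click_Acyc:
  assumes "Or \<in> Acyc V E" and "is_source Or x"
  shows "click Or x \<in> Acyc V E"
proof -
  have "E u v" if arc: "(u, v) \<in> click Or x" for u v
  proof (cases "u = x \<or> v = x")
    case True
    with arc have "(v, u) \<in> Or"
      by (simp add: mem_click)
    then show ?thesis
      using Acyc_edge[OF assms(1)] edge_sym by blast
  next
    case False
    with arc have "(u, v) \<in> Or"
      by (simp add: mem_click)
    then show ?thesis
      by (rule Acyc_edge[OF assms(1)])
  qed
  moreover have "(u, v) \<in> click Or x \<longleftrightarrow> (v, u) \<notin> click Or x" if edge: "E u v" for u v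
    using Acyc_orient[OF assms(1) edge] Acyc_orient[OF assms(1) edge_sym[OF edge]]
    by (simp add: mem_click)
  ultimately show ?thesis
    using acyclic_click[OF Acyc_acyclic[OF assms(1)] assms(2)]
    unfolding Acyc_def edge_rel_def by blast
qed

lemma click_step_converse:
  assumes "(P, Q) \<in> click_step V E"
  shows "(Q\<inverse>, P\<inverse>) \<in> click_step V E"
proof -
  from assms obtain x where P: "P \<in> Acyc V E" and x: "x \<in> V" "is_source P x"
    and Q: "Q = click P x"
    unfolding click_step_def by blast
  have "is_source (Q\<inverse>) x"
    using x(2) unfolding Q is_source_def by (simp add: mem_click)
  moreover have "click (Q\<inverse>) x = P\<inverse>"
    unfolding Q by (auto simp: mem_click split: if_splits)
  moreover have "Q\<inverse> \<in> Acyc V E"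
    unfolding Q by (intro converse_Acyc click_Acyc P x)
  ultimately show ?thesis
    using x(1) unfolding click_step_def by auto
qed

lemma kappa_equiv_converse:
  assumes "(P, Q) \<in> kappa_equiv V E"
  shows "(P\<inverse>, Q\<inverse>) \<in> kappa_equiv V E"
  using assms unfolding kappa_equiv_def
proof (induction rule: rtrancl_induct)
  case (step Q R)
  then have "(Q\<inverse>, R\<inverse>) \<in> click_step V E \<union> (click_step V E)\<inverse>"
    using click_step_converse by blast
  with step.IH show ?case
    by (rule rtrancl_into_rtrancl)
qed simp

lemma kappa_class_converse:
  "converse ` (kappa_equiv V E `` {Or}) = kappa_equiv V E `` {Or\<inverse>}"
proof (intro set_eqI iffI)
  fix P
  assume "P \<in> converse ` (kappa_equiv V E `` {Or})"
  then show "P \<in> kappa_equiv V E `` {Or\<inverse>}"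
    using kappa_equiv_converse by blast
next
  fix P
  assume "P \<in> kappa_equiv V E `` {Or\<inverse>}"
  then have "(Or, P\<inverse>) \<in> kappa_equiv V E"
    using kappa_equiv_converse[of "Or\<inverse>" P] by simp
  then show "P \<in> converse ` (kappa_equiv V E `` {Or})"
    by (intro image_eqI[of _ _ "P\<inverse>"]) auto
qed

lemma delta_equiv_iff:
  assumes "Or \<in> Acyc V E"
  shows "(Or, P) \<in> delta_equiv V E \<longleftrightarrow>
    (Or, P) \<in> kappa_equiv V E \<or> (Or\<inverse>, P) \<in> kappa_equiv V E"
proof
  assume "(Or, P) \<in> delta_equiv V E"
  then show "(Or, P) \<in> kappa_equiv V E \<or> (Or\<inverse>, P) \<in> kappa_equiv V E"
    unfolding delta_equiv_def
  proof (induction rule: rtrancl_induct)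
    case base
    then show ?case
      by (simp add: kappa_equiv_def)
  next
    case (step Q R)
    from step.hyps(2) consider "(Q, R) \<in> click_step V E \<union> (click_step V E)\<inverse>" | "R = Q\<inverse>"
      by (auto simp: rev_step_def rev_orient_def)
    then show ?case
    proof cases
      case 1
      then have "(Q, R) \<in> kappa_equiv V E"
        unfolding kappa_equiv_def by (rule r_into_rtrancl)
      with step.IH show ?thesis
        using kappa_equiv_trans by blast
    next
      case 2
      from step.IH show ?thesis
      proof
        assume "(Or, Q) \<in> kappa_equiv V E"
        then have "(Or\<inverse>, Q\<inverse>) \<in> kappa_equiv V E"
          by (rule kappa_equiv_converse)
        with 2 show ?thesis by simp
      next
        assume "(Or\<inverse>, Q) \<in> kappa_equiv V E"
        then have "((Or\<inverse>)\<inverse>, Q\<inverse>) \<in> kappa_equiv V E"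
          by (rule kappa_equiv_converse)
        with 2 show ?thesis by simp
      qed
    qed
  qed
next
  note kappa_delta = kappa_equiv_subset_delta_equiv[of V E]
  have reverse: "(Or, Or\<inverse>) \<in> delta_equiv V E"
    using assms unfolding delta_equiv_def rev_step_def rev_orient_def by blast
  assume "(Or, P) \<in> kappa_equiv V E \<or> (Or\<inverse>, P) \<in> kappa_equiv V E"
  then show "(Or, P) \<in> delta_equiv V E"
  proof
    assume "(Or\<inverse>, P) \<in> kappa_equiv V E"
    with kappa_delta have "(Or\<inverse>, P) \<in> delta_equiv V E" by blast
    with reverse show ?thesis
      unfolding delta_equiv_def by (rule rtrancl_trans)
  qed (use kappa_delta in blast)
qed

lemma colour_orientation_Acyc:
  assumes "proper_colouring E b"
  shows "colour_orientation E b \<in> Acyc V E"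
proof -
  have "acyclic (colour_orientation E b)"
    by (rule acyclic_if_height_function[OF height_function_colour_orientation[OF assms]])
  moreover have "E u v \<Longrightarrow> (u, v) \<in> colour_orientation E b \<longleftrightarrow> (v, u) \<notin> colour_orientation E b"
    for u v
    using assms edge_sym unfolding colour_orientation_def proper_colouring_def by blast
  ultimately show ?thesis
    unfolding Acyc_def edge_rel_def colour_orientation_def by blast
qed

lemma converse_colour_orientation:
  assumes "proper_colouring E b"
  shows "(colour_orientation E b)\<inverse> = colour_orientation E (\<lambda>u. \<not> b u)"
  using assms edge_sym unfolding colour_orientation_def proper_colouring_def by blast

lemma colour_orientation_cong:
  assumes "\<And>u. u \<in> V \<Longrightarrow> b u \<longleftrightarrow> b' u"
  shows "colour_orientation E b = colour_orientation E b'"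
  using assms edge_vertices unfolding colour_orientation_def by blast

lemma two_levels_colour_orientation:
  assumes "Or \<in> Acyc V E" and "height_function Or c" and "\<forall>y\<in>V. c y = L \<or> c y = L + 1"
  shows "proper_colouring E (\<lambda>u. c u = L + 1)"
    and "Or = colour_orientation E (\<lambda>u. c u = L + 1)"
proof -
  have levels: "c u = L + 1 \<and> c v = L" if arc: "(u, v) \<in> Or" for u v
  proof -
    have "u \<in> V" "v \<in> V"
      using edge_vertices[OF Acyc_edge[OF assms(1) arc]] by simp_all
    with assms(3) have "c u = L \<or> c u = L + 1" "c v = L \<or> c v = L + 1"
      by simp_all
    with height_functionD[OF assms(2) arc] show ?thesis
      by linarith
  qed
  have "(u, v) \<in> Or \<longleftrightarrow> E u v \<and> c u = L + 1" for u v
  proof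
    assume "E u v \<and> c u = L + 1"
    with Acyc_orient[OF assms(1)] levels[of v u] show "(u, v) \<in> Or" by force
  qed (use Acyc_edge[OF assms(1)] levels in blast)
  then show "Or = colour_orientation E (\<lambda>u. c u = L + 1)"
    unfolding colour_orientation_def by blast
  have "c u = L + 1 \<longleftrightarrow> c v \<noteq> L + 1" if edge: "E u v" for u v
    using Acyc_orient[OF assms(1) edge] levels[of u v] levels[of v u] by force
  then show "proper_colouring E (\<lambda>u. c u = L + 1)"
    unfolding proper_colouring_def by blast
qed

lemma source_if_max_height:
  assumes "Or \<in> Acyc V E" and "height_function Or c" and "x \<in> V" and "\<forall>y\<in>V. c y \<le> c x"
  shows "is_source Or x"
  unfolding is_source_def
proof (intro allI notI)
  fix w
  assume arc: "(w, x) \<in> Or"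
  have "c w = c x + 1"
    using height_functionD[OF assms(2) arc] .
  moreover have "c w \<le> c x"
    using assms(4) edge_vertices[OF Acyc_edge[OF assms(1) arc]] by blast
  ultimately show False by linarith
qed

text \<open>Each step clicks a vertex of maximal height, lowering its height by two.\<close>

lemma descend_to_two_levels:
  assumes "Or \<in> Acyc V E" and "height_function Or c" and "\<forall>y\<in>V. L \<le> c y"
  shows "\<exists>Or' c'. (Or, Or') \<in> kappa_equiv V E \<and> Or' \<in> Acyc V E \<and> height_function Or' c'
    \<and> (\<forall>y\<in>V. (c' y = L \<or> c' y = L + 1) \<and> even (c' y - c y))"
  using assms
proof (induction "\<Sum>y\<in>V. nat (c y - L)" arbitrary: Or c rule: less_induct)
  case less
  show ?case
  proof (cases "\<forall>y\<in>V. c y \<le> L + 1")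
    case True
    have "c y = L \<or> c y = L + 1" if "y \<in> V" for y
    proof -
      have "L \<le> c y" "c y \<le> L + 1"
        using True less.prems(3) that by simp_all
      then show ?thesis by linarith
    qed
    with less.prems(1,2) show ?thesis
      by (intro exI[of _ Or] exI[of _ c]) (simp add: kappa_equiv_def)
  next
    case False
    then obtain y0 where y0: "y0 \<in> V" "L + 1 < c y0" by force
    have "Max (c ` V) \<in> c ` V"
      using y0(1) finite_vertices by (intro Max_in) auto
    then obtain x where "x \<in> V" and x_max: "c x = Max (c ` V)" by auto
    moreover have "\<forall>y\<in>V. c y \<le> Max (c ` V)"
      using finite_vertices by simp
    ultimately have x: "x \<in> V" "\<forall>y\<in>V. c y \<le> c x" by simp_all
    have x_high: "L + 2 \<le> c x"
      using x(2) y0 by force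
    have source: "is_source Or x"
      using source_if_max_height[OF less.prems(1,2) x] .
    let ?c = "c(x := c x - 2)"
    have "(\<Sum>y\<in>V. nat (?c y - L)) < (\<Sum>y\<in>V. nat (c y - L))"
    proof (rule sum_strict_mono_ex1[OF finite_vertices])
      show "\<forall>y\<in>V. nat (?c y - L) \<le> nat (c y - L)"
        by (simp add: nat_mono)
      show "\<exists>y\<in>V. nat (?c y - L) < nat (c y - L)"
        using x(1) x_high by (intro bexI[of _ x]) simp_all
    qed
    moreover have "click Or x \<in> Acyc V E"
      using click_Acyc[OF less.prems(1) source] .
    moreover have "height_function (click Or x) ?c"
      using height_function_click[OF less.prems(2) source] .
    moreover have "\<forall>y\<in>V. L \<le> ?c y"
      using less.prems(3) x_high by simp
    ultimately obtain Or' c' where Or': "(click Or x, Or') \<in> kappa_equiv V E" "Or' \<in> Acyc V E"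
        "height_function Or' c'" "\<forall>y\<in>V. (c' y = L \<or> c' y = L + 1) \<and> even (c' y - ?c y)"
      using less.hyps by blast
    have "(Or, Or') \<in> kappa_equiv V E"
      using kappa_equiv_trans[OF kappa_equiv_click[OF less.prems(1) x(1) source] Or'(1)] .
    moreover have "even (c' y - c y)" if "y \<in> V" for y
    proof -
      have "c' y - c y = (c' y - ?c y) - (if y = x then 2 else 0)"
        by simp
      then show ?thesis
        using Or'(4) that by simp
    qed
    ultimately show ?thesis
      using Or'(2-4) by blast
  qed
qed

text \<open>Descending from levels \<open>{0, 1}\<close> to \<open>{-1, 0}\<close> with parities preserved lowers exactly
  the vertices of colour \<open>b\<close>, which reverses every edge.\<close>

lemma colour_orientation_self_reverse:
  assumes "proper_colouring E b"
  shows "(colour_orientation E b, (colour_orientation E b)\<inverse>) \<in> kappa_equiv V E"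
proof -
  let ?Or = "colour_orientation E b" and ?c = "\<lambda>u. if b u then 1 else 0 :: int"
  have "height_function ?Or ?c"
    by (rule height_function_colour_orientation[OF assms])
  moreover have "\<forall>y\<in>V. -1 \<le> ?c y"
    by simp
  ultimately obtain Or' c' where Or': "(?Or, Or') \<in> kappa_equiv V E" "Or' \<in> Acyc V E"
      "height_function Or' c'" "\<forall>y\<in>V. (c' y = -1 \<or> c' y = -1 + 1) \<and> even (c' y - ?c y)"
    using descend_to_two_levels[OF colour_orientation_Acyc[OF assms]] by blast
  have "Or' = colour_orientation E (\<lambda>u. c' u = -1 + 1)"
    using two_levels_colour_orientation(2)[OF Or'(2,3)] Or'(4) by blast
  also have "\<dots> = colour_orientation E (\<lambda>u. \<not> b u)"
    using Or'(4) by (intro colour_orientation_cong) fastforce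
  also have "\<dots> = ?Or\<inverse>"
    using converse_colour_orientation[OF assms] by simp
  finally show ?thesis
    using Or'(1) by simp
qed

lemma self_reverse_kappa_equiv_colour_orientation:
  assumes "connected_graph V E" and "Or \<in> Acyc V E" and "(Or, Or\<inverse>) \<in> kappa_equiv V E"
    and "proper_colouring E b"
  shows "(Or, colour_orientation E b) \<in> kappa_equiv V E"
proof -
  obtain c where c: "height_function Or c"
    using self_reverse_height_function[OF Acyc_acyclic[OF assms(2)] assms(3)] ..
  obtain L where "\<forall>y\<in>V. L \<le> c y"
    using bdd_below_finite[OF finite_imageI[OF finite_vertices, of c]]
    unfolding bdd_below_def by blast
  then obtain Or' c' where Or': "(Or, Or') \<in> kappa_equiv V E" "Or' \<in> Acyc V E"
      "height_function Or' c'" "\<forall>y\<in>V. c' y = L \<or> c' y = L + 1"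
    using descend_to_two_levels[OF assms(2) c] by blast
  let ?b = "\<lambda>u. c' u = L + 1"
  have proper: "proper_colouring E ?b" and Or'_eq: "Or' = colour_orientation E ?b"
    using two_levels_colour_orientation[OF Or'(2-4)] by blast+
  from connected_proper_colourings[OF assms(1) proper assms(4)]
  show ?thesis
  proof
    assume "\<forall>u\<in>V. ?b u \<longleftrightarrow> b u"
    then have "Or' = colour_orientation E b"
      unfolding Or'_eq by (intro colour_orientation_cong) blast
    with Or'(1) show ?thesis by simp
  next
    assume "\<forall>u\<in>V. ?b u \<longleftrightarrow> \<not> b u"
    then have "Or' = (colour_orientation E b)\<inverse>"
      unfolding Or'_eq converse_colour_orientation[OF assms(4)]
      by (intro colour_orientation_cong) blast
    with Or'(1) kappa_equiv_sym[OF colour_orientation_self_reverse[OF assms(4)]]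
    show ?thesis
      using kappa_equiv_trans by metis
  qed
qed

lemma self_reverse_class_iff:
  "converse ` (kappa_equiv V E `` {Or}) = kappa_equiv V E `` {Or} \<longleftrightarrow> (Or, Or\<inverse>) \<in> kappa_equiv V E"
  unfolding kappa_class_converse kappa_class_eq_iff using kappa_equiv_sym by blast

lemma mem_self_reverse_classes:
  "C \<in> self_reverse_classes V E \<longleftrightarrow>
    (\<exists>Or \<in> Acyc V E. (Or, Or\<inverse>) \<in> kappa_equiv V E \<and> C = kappa_equiv V E `` {Or})"
proof -
  have "C \<in> self_reverse_classes V E \<longleftrightarrow>
      (\<exists>Or \<in> Acyc V E. C = kappa_equiv V E `` {Or}) \<and> converse ` C = C"
    unfolding self_reverse_classes_def quotient_eq_image by blast
  then show ?thesis
    using self_reverse_class_iff by blast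
qed

lemma kappa_add_self_reverse_classes: "kappa V E + card (self_reverse_classes V E) = 2 * delta V E"
proof -
  let ?K = "Acyc V E // kappa_equiv V E"
  note K = quotient_eq_image[of "Acyc V E" "kappa_equiv V E"]
  have D: "Acyc V E // delta_equiv V E = (\<lambda>C. delta_equiv V E `` C) ` ?K"
    unfolding K quotient_eq_image image_image delta_image_kappa_class ..
  have "card ?K + card {C \<in> ?K. converse ` C = C} = 2 * card ((\<lambda>C. delta_equiv V E `` C) ` ?K)"
  proof (rule card_involution_fibres)
    show "finite ?K"
      unfolding K using finite_Acyc by simp
  next
    fix C
    assume "C \<in> ?K"
    then obtain Or where Or: "Or \<in> Acyc V E" and C: "C = kappa_equiv V E `` {Or}"
      unfolding K by blast
    show "converse ` C \<in> ?K"
      unfolding C kappa_class_converse K by (rule imageI[OF converse_Acyc[OF Or]])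
  next
    fix C C'
    assume "C \<in> ?K" and "C' \<in> ?K"
    then obtain Or P where Or: "Or \<in> Acyc V E" "C = kappa_equiv V E `` {Or}"
      and P: "C' = kappa_equiv V E `` {P}"
      unfolding K by blast
    have "delta_equiv V E `` C = delta_equiv V E `` C' \<longleftrightarrow> (Or, P) \<in> delta_equiv V E"
      unfolding Or(2) P delta_image_kappa_class
      by (rule eq_equiv_class_iff[OF equiv_delta_equiv UNIV_I UNIV_I])
    also have "\<dots> \<longleftrightarrow> (Or, P) \<in> kappa_equiv V E \<or> (Or\<inverse>, P) \<in> kappa_equiv V E"
      by (rule delta_equiv_iff[OF Or(1)])
    also have "\<dots> \<longleftrightarrow> C' = C \<or> C' = converse ` C"
    proof -
      have "C' = C \<longleftrightarrow> (Or, P) \<in> kappa_equiv V E"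
        unfolding Or(2) P kappa_class_eq_iff using kappa_equiv_sym by blast
      moreover have "C' = converse ` C \<longleftrightarrow> (Or\<inverse>, P) \<in> kappa_equiv V E"
        unfolding Or(2) P kappa_class_converse kappa_class_eq_iff using kappa_equiv_sym by blast
      ultimately show ?thesis by simp
    qed
    finally show "delta_equiv V E `` C = delta_equiv V E `` C' \<longleftrightarrow> C' = C \<or> C' = converse ` C" .
  qed
  then show ?thesis
    unfolding kappa_def delta_def self_reverse_classes_def D .
qed

lemma self_reverse_classes_non_bipartite:
  assumes "\<not> bipartite V E"
  shows "self_reverse_classes V E = {}"
proof -
  have False if Or: "Or \<in> Acyc V E" and self_reverse: "(Or, Or\<inverse>) \<in> kappa_equiv V E" for Or
  proof -
    obtain c where "height_function Or c"
      using self_reverse_height_function[OF Acyc_acyclic[OF Or] self_reverse] ..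
    with bipartite_if_height_function[OF Or] assms show False by blast
  qed
  then show ?thesis
    using mem_self_reverse_classes by blast
qed

lemma card_self_reverse_classes_bipartite:
  assumes "bipartite V E" and "connected_graph V E"
  shows "card (self_reverse_classes V E) = 1"
proof -
  obtain b :: "'a \<Rightarrow> bool" where "\<forall>x\<in>V. \<forall>y\<in>V. E x y \<longrightarrow> b x \<noteq> b y"
    using assms(1) unfolding bipartite_def by blast
  then have b: "proper_colouring E b"
    using edge_vertices unfolding proper_colouring_def by blast
  let ?B = "colour_orientation E b"
  have "self_reverse_classes V E = {kappa_equiv V E `` {?B}}"
  proof (intro set_eqI iffI)
    fix C
    assume "C \<in> self_reverse_classes V E"
    then obtain Or where "Or \<in> Acyc V E" "(Or, Or\<inverse>) \<in> kappa_equiv V E"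
      and "C = kappa_equiv V E `` {Or}"
      unfolding mem_self_reverse_classes by blast
    with self_reverse_kappa_equiv_colour_orientation[OF assms(2) _ _ b]
    show "C \<in> {kappa_equiv V E `` {?B}}"
      by (simp add: kappa_class_eq_iff)
  next
    fix C
    assume "C \<in> {kappa_equiv V E `` {?B}}"
    then show "C \<in> self_reverse_classes V E"
      using colour_orientation_Acyc[OF b] colour_orientation_self_reverse[OF b]
      unfolding mem_self_reverse_classes by blast
  qed
  then show ?thesis by simp
qed

end

theorem proposition3:
  fixes V :: "'a set" and E :: "'a \<Rightarrow> 'a \<Rightarrow> bool"
  assumes "simple_graph V E" and "connected_graph V E"
  shows "(\<not> bipartite V E \<longrightarrow> real (delta V E) = real (kappa V E) / 2)
       \<and> (bipartite V E \<longrightarrow> real (delta V E) = (real (kappa V E) + 1) / 2)"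
proof -
  interpret finite_simple_graph V E
    by (rule finite_simple_graph.intro) (rule assms(1))
  have "real (kappa V E) + real (card (self_reverse_classes V E)) = 2 * real (delta V E)"
    using arg_cong[OF kappa_add_self_reverse_classes, of real] by simp
  then show ?thesis
    using self_reverse_classes_non_bipartite card_self_reverse_classes_bipartite[OF _ assms(2)]
    by auto
qed

end
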